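(* Let $\mathbb{F}\in\{\mathbb{R},\mathbb{C}\}$, $M>N\ge1$, $M\ge 2$, and let $\mathcal{P}(M,N)$ be the set of Parseval frames for $\mathbb{F}^N$ with $M$ vectors. For $\Phi=\{\varphi_i\}_{i=1}^M\in\mathcal{P}(M,N)$ define $$EAD(\Phi)=\sum_{i=1}^M\Big(\|\varphi_i\|^2-\frac{N}{M}\Big)^2+\sum_{i\neq j}\big(|\langle\varphi_i,\varphi_j\rangle|-c_{M,N}\big)^2,\qquad c_{M,N}=\sqrt{\frac{N(M-N)}{M^2(M-1)}},$$ $$V(\Phi)=\sum_{i=1}^M\Big(\|\varphi_i\|^2-\frac{N}{M}\Big)^2+\sum_{i\neq j}\big(|\langle\varphi_i,\varphi_j\rangle|-c_\Phi\big)^2,\qquad c_\Phi=\frac{TC(\Phi)}{M(M-1)}.$$ Then the following three optimization problems have the same set of solutions: maximizing $TC(\Phi)$ over $\mathcal{P}(M,N)$; minimizing $EAD(\Phi)$ over $\mathcal{P}(M,N)$; minimizing $V(\Phi)$ over $\mathcal{P}(M,N)$.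
   Context: A Parseval frame for $\mathbb{F}^N$ is a family $\{\varphi_i\}_{i=1}^M\subseteq\mathbb{F}^N$ whose $N\times M$ matrix $\Phi$ (columns $\varphi_i$) satisfies $\Phi\Phi^*=I$. The total coherence is $TC(\Phi)=\sum_{i\neq j}|\langle\varphi_i,\varphi_j\rangle|$. *)

theory Defs
  imports Complex_Main
begin

text \<open>A family of M vectors in F^N (F = R or C) is encoded as the N x M matrix
  Phi :: nat => nat => complex, where Phi k i is the k-th coordinate of the i-th
  frame vector (k < N, i < M); entries outside this range are 0. The real case is
  the case where all entries lie in the set of reals.\<close>

definition frame_inner :: "nat \<Rightarrow> (nat \<Rightarrow> nat \<Rightarrow> complex) \<Rightarrow> nat \<Rightarrow> nat \<Rightarrow> complex" where
  "frame_inner N Phi i j = (\<Sum>k<N. Phi k i * cnj (Phi k j))"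

definition frame_normsq :: "nat \<Rightarrow> (nat \<Rightarrow> nat \<Rightarrow> complex) \<Rightarrow> nat \<Rightarrow> real" where
  "frame_normsq N Phi i = (\<Sum>k<N. (cmod (Phi k i))\<^sup>2)"

definition parseval_frames :: "complex set \<Rightarrow> nat \<Rightarrow> nat \<Rightarrow> (nat \<Rightarrow> nat \<Rightarrow> complex) set" where
  "parseval_frames F M N = {Phi.
     (\<forall>k i. k < N \<and> i < M \<longrightarrow> Phi k i \<in> F) \<and>
     (\<forall>k i. \<not> (k < N \<and> i < M) \<longrightarrow> Phi k i = 0) \<and>
     (\<forall>k l. k < N \<and> l < N \<longrightarrow>
        (\<Sum>i<M. Phi k i * cnj (Phi l i)) = (if k = l then 1 else 0))}"

definition total_coherence :: "nat \<Rightarrow> nat \<Rightarrow> (nat \<Rightarrow> nat \<Rightarrow> complex) \<Rightarrow> real" where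
  "total_coherence M N Phi = (\<Sum>i<M. \<Sum>j\<in>{..<M} - {i}. cmod (frame_inner N Phi i j))"

definition c_MN :: "nat \<Rightarrow> nat \<Rightarrow> real" where
  "c_MN M N = sqrt ((real N * (real M - real N)) / ((real M)\<^sup>2 * (real M - 1)))"

definition EAD :: "nat \<Rightarrow> nat \<Rightarrow> (nat \<Rightarrow> nat \<Rightarrow> complex) \<Rightarrow> real" where
  "EAD M N Phi = (\<Sum>i<M. (frame_normsq N Phi i - real N / real M)\<^sup>2)
     + (\<Sum>i<M. \<Sum>j\<in>{..<M} - {i}. (cmod (frame_inner N Phi i j) - c_MN M N)\<^sup>2)"

definition c_Phi :: "nat \<Rightarrow> nat \<Rightarrow> (nat \<Rightarrow> nat \<Rightarrow> complex) \<Rightarrow> real" where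
  "c_Phi M N Phi = total_coherence M N Phi / (real M * (real M - 1))"

definition Vfun :: "nat \<Rightarrow> nat \<Rightarrow> (nat \<Rightarrow> nat \<Rightarrow> complex) \<Rightarrow> real" where
  "Vfun M N Phi = (\<Sum>i<M. (frame_normsq N Phi i - real N / real M)\<^sup>2)
     + (\<Sum>i<M. \<Sum>j\<in>{..<M} - {i}. (cmod (frame_inner N Phi i j) - c_Phi M N Phi)\<^sup>2)"

definition maximizers :: "('a \<Rightarrow> real) \<Rightarrow> 'a set \<Rightarrow> 'a set" where
  "maximizers f S = {x \<in> S. \<forall>y\<in>S. f y \<le> f x}"

definition minimizers :: "('a \<Rightarrow> real) \<Rightarrow> 'a set \<Rightarrow> 'a set" where
  "minimizers f S = {x \<in> S. \<forall>y\<in>S. f x \<le> f y}"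

end

theory Submission
  imports Defs
begin

text \<open>For a Parseval frame the squared norms sum to N and the squared moduli of all
  entries of the Gram matrix sum to N as well (both are traces of powers of the
  identity frame operator). Expanding the squares in EAD and V therefore leaves
  a quantity depending on the frame only through TC: EAD is a decreasing affine
  function of TC and V equals a constant minus TC^2 / (M(M - 1)).
  Since TC is nonnegative, all three problems order the frames in the same way.
  The argument does not use that the entries are real or complex.\<close>

lemma maximizers_eq_minimizers_if_order_reversing:
  assumes "\<And>x y. x \<in> S \<Longrightarrow> y \<in> S \<Longrightarrow> g x \<le> g y \<longleftrightarrow> f y \<le> f x"
  shows "maximizers f S = minimizers g S"
  using assms unfolding maximizers_def minimizers_def by blast

lemma sum_power2_diff_const:
  fixes f :: "'a \<Rightarrow> 'b :: comm_ring_1"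
  shows "(\<Sum>x\<in>A. (f x - c)\<^sup>2)
    = (\<Sum>x\<in>A. (f x)\<^sup>2) - 2 * c * (\<Sum>x\<in>A. f x) + of_nat (card A) * c\<^sup>2"
  by (simp add: power2_diff sum.distrib sum_subtractf sum_distrib_left sum_distrib_right mult_ac)

lemma sum_off_diagonal:
  fixes g :: "nat \<Rightarrow> nat \<Rightarrow> 'a :: ab_group_add"
  shows "(\<Sum>i<M. \<Sum>j\<in>{..<M} - {i}. g i j) = (\<Sum>i<M. \<Sum>j<M. g i j) - (\<Sum>i<M. g i i)"
proof -
  have "(\<Sum>i<M. \<Sum>j<M. g i j) = (\<Sum>i<M. g i i + (\<Sum>j\<in>{..<M} - {i}. g i j))"
    by (intro sum.cong refl) (simp add: sum.remove)
  then show ?thesis by (simp add: sum.distrib)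
qed

lemma sum_swap_pairs:
  "(\<Sum>i\<in>A. \<Sum>j\<in>B. \<Sum>k\<in>C. \<Sum>l\<in>D. f i j k l)
   = (\<Sum>k\<in>C. \<Sum>l\<in>D. \<Sum>i\<in>A. \<Sum>j\<in>B. (f i j k l :: 'a :: comm_monoid_add))"
proof -
  have "(\<Sum>i\<in>A. \<Sum>j\<in>B. \<Sum>k\<in>C. \<Sum>l\<in>D. f i j k l)
      = (\<Sum>i\<in>A. \<Sum>k\<in>C. \<Sum>l\<in>D. \<Sum>j\<in>B. f i j k l)"
    by (intro sum.cong refl, subst sum.swap, intro sum.cong refl, rule sum.swap)
  also have "\<dots> = (\<Sum>k\<in>C. \<Sum>l\<in>D. \<Sum>i\<in>A. \<Sum>j\<in>B. f i j k l)"
    by (subst sum.swap, intro sum.cong refl, rule sum.swap)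
  finally show ?thesis .
qed

lemma frame_inner_diag: "frame_inner N Phi i i = complex_of_real (frame_normsq N Phi i)"
  unfolding frame_inner_def frame_normsq_def by (simp only: of_real_sum complex_norm_square)

lemma frame_normsq_eq_cmod_frame_inner: "frame_normsq N Phi i = cmod (frame_inner N Phi i i)"
proof -
  have "frame_normsq N Phi i \<ge> 0"
    unfolding frame_normsq_def by (simp add: sum_nonneg)
  then show ?thesis by (simp add: frame_inner_diag)
qed

lemma sum_frame_normsq_eq_trace:
  "complex_of_real (\<Sum>i<M. frame_normsq N Phi i) = (\<Sum>k<N. \<Sum>i<M. Phi k i * cnj (Phi k i))"
  unfolding frame_normsq_def of_real_sum complex_norm_square by (rule sum.swap)

lemma sum_cmod_frame_inner_sq_eq_frame_operator:
  "(\<Sum>i<M. \<Sum>j<M. (cmod (frame_inner N Phi i j))\<^sup>2)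
   = (\<Sum>k<N. \<Sum>l<N. (cmod (\<Sum>i<M. Phi k i * cnj (Phi l i)))\<^sup>2)"
proof -
  let ?S = "\<lambda>k l. \<Sum>i<M. Phi k i * cnj (Phi l i)"
  have "frame_inner N Phi i j * cnj (frame_inner N Phi i j)
      = (\<Sum>k<N. \<Sum>l<N. (Phi k i * cnj (Phi l i)) * cnj (Phi k j * cnj (Phi l j)))" for i j
    unfolding frame_inner_def by (simp add: sum_product mult_ac)
  then have "complex_of_real (\<Sum>i<M. \<Sum>j<M. (cmod (frame_inner N Phi i j))\<^sup>2)
      = (\<Sum>i<M. \<Sum>j<M. \<Sum>k<N. \<Sum>l<N. (Phi k i * cnj (Phi l i)) * cnj (Phi k j * cnj (Phi l j)))"
    by (simp only: of_real_sum complex_norm_square)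
  also have "\<dots> = (\<Sum>k<N. \<Sum>l<N. \<Sum>i<M. \<Sum>j<M. (Phi k i * cnj (Phi l i)) * cnj (Phi k j * cnj (Phi l j)))"
    by (rule sum_swap_pairs)
  also have "\<dots> = (\<Sum>k<N. \<Sum>l<N. ?S k l * cnj (?S k l))"
    by (simp only: sum_product cnj_sum)
  also have "\<dots> = complex_of_real (\<Sum>k<N. \<Sum>l<N. (cmod (?S k l))\<^sup>2)"
    by (simp only: of_real_sum complex_norm_square)
  finally show ?thesis by (simp only: of_real_eq_iff)
qed

lemma parseval_frames_orthonormal_rows:
  assumes "Phi \<in> parseval_frames F M N" "k < N" "l < N"
  shows "(\<Sum>i<M. Phi k i * cnj (Phi l i)) = (if k = l then 1 else 0)"
  using assms unfolding parseval_frames_def by blast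

lemma parseval_sum_frame_normsq:
  assumes "Phi \<in> parseval_frames F M N"
  shows "(\<Sum>i<M. frame_normsq N Phi i) = real N"
proof -
  have "complex_of_real (\<Sum>i<M. frame_normsq N Phi i) = (\<Sum>k<N. 1)"
    unfolding sum_frame_normsq_eq_trace
    by (intro sum.cong refl) (simp add: parseval_frames_orthonormal_rows[OF assms])
  then show ?thesis by (metis of_real_eq_iff of_real_of_nat_eq card_lessThan sum_constant mult_1_right)
qed

lemma parseval_sum_cmod_frame_inner_sq:
  assumes "Phi \<in> parseval_frames F M N"
  shows "(\<Sum>i<M. \<Sum>j<M. (cmod (frame_inner N Phi i j))\<^sup>2) = real N"
proof -
  have "(cmod (\<Sum>i<M. Phi k i * cnj (Phi l i)))\<^sup>2 = (if k = l then 1 else 0)"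
    if "k < N" "l < N" for k l
    using that by (simp add: parseval_frames_orthonormal_rows[OF assms])
  then show ?thesis
    unfolding sum_cmod_frame_inner_sq_eq_frame_operator by simp
qed

definition frame_deviation :: "nat \<Rightarrow> nat \<Rightarrow> real \<Rightarrow> (nat \<Rightarrow> nat \<Rightarrow> complex) \<Rightarrow> real" where
  "frame_deviation M N c Phi = (\<Sum>i<M. (frame_normsq N Phi i - real N / real M)\<^sup>2)
     + (\<Sum>i<M. \<Sum>j\<in>{..<M} - {i}. (cmod (frame_inner N Phi i j) - c)\<^sup>2)"

lemma EAD_eq_frame_deviation: "EAD M N Phi = frame_deviation M N (c_MN M N) Phi"
  unfolding EAD_def frame_deviation_def ..

lemma Vfun_eq_frame_deviation: "Vfun M N Phi = frame_deviation M N (c_Phi M N Phi) Phi"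
  unfolding Vfun_def frame_deviation_def ..

lemma parseval_frame_deviation:
  assumes Phi: "Phi \<in> parseval_frames F M N" and "M > 0"
  shows "frame_deviation M N c Phi = real N - (real N)\<^sup>2 / real M
    - 2 * c * total_coherence M N Phi + real M * (real M - 1) * c\<^sup>2"
proof -
  define a where "a i j = cmod (frame_inner N Phi i j)" for i j
  have diag: "frame_normsq N Phi i = a i i" for i
    by (simp add: a_def frame_normsq_eq_cmod_frame_inner)
  have norms: "(\<Sum>i<M. (frame_normsq N Phi i - real N / real M)\<^sup>2)
      = (\<Sum>i<M. (a i i)\<^sup>2) - (real N)\<^sup>2 / real M"
    using sum_power2_diff_const[of "\<lambda>i. a i i" "real N / real M" "{..<M}"]
      parseval_sum_frame_normsq[OF Phi] \<open>M > 0\<close>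
    by (simp add: diag field_simps power2_eq_square)
  have "(\<Sum>j\<in>{..<M} - {i}. (a i j - c)\<^sup>2)
      = (\<Sum>j\<in>{..<M} - {i}. (a i j)\<^sup>2) - 2 * c * (\<Sum>j\<in>{..<M} - {i}. a i j)
        + (real M - 1) * c\<^sup>2" if "i < M" for i
    using sum_power2_diff_const[of "a i" c "{..<M} - {i}"] that by (simp add: of_nat_diff)
  then have pairs: "(\<Sum>i<M. \<Sum>j\<in>{..<M} - {i}. (a i j - c)\<^sup>2)
      = (\<Sum>i<M. \<Sum>j\<in>{..<M} - {i}. (a i j)\<^sup>2) - 2 * c * total_coherence M N Phi
        + real M * (real M - 1) * c\<^sup>2"
    by (simp add: total_coherence_def a_def sum.distrib sum_subtractf sum_distrib_left)
  have "(\<Sum>i<M. \<Sum>j\<in>{..<M} - {i}. (a i j)\<^sup>2) = real N - (\<Sum>i<M. (a i i)\<^sup>2)"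
    using parseval_sum_cmod_frame_inner_sq[OF Phi] by (simp add: sum_off_diagonal a_def)
  with norms pairs show ?thesis
    unfolding frame_deviation_def a_def by simp
qed

lemma total_coherence_nonneg: "total_coherence M N Phi \<ge> 0"
  unfolding total_coherence_def by (intro sum_nonneg) auto

lemma c_MN_pos:
  assumes "N \<ge> 1" "M > N"
  shows "c_MN M N > 0"
  using assms unfolding c_MN_def by (simp add: of_nat_diff)

lemma parseval_EAD_le_iff:
  assumes "x \<in> parseval_frames F M N" "y \<in> parseval_frames F M N" "N \<ge> 1" "M > N"
  shows "EAD M N x \<le> EAD M N y \<longleftrightarrow> total_coherence M N y \<le> total_coherence M N x"
  using parseval_frame_deviation[OF assms(1)] parseval_frame_deviation[OF assms(2)]
    c_MN_pos[OF assms(3,4)] \<open>M > N\<close>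
  by (simp add: EAD_eq_frame_deviation mult_le_cancel_left_pos)

lemma parseval_Vfun:
  assumes Phi: "Phi \<in> parseval_frames F M N" and "M \<ge> 2"
  shows "Vfun M N Phi = real N - (real N)\<^sup>2 / real M
    - (total_coherence M N Phi)\<^sup>2 / (real M * (real M - 1))"
proof -
  define t where "t = total_coherence M N Phi"
  define D where "D = real M * (real M - 1)"
  have "D > 0" using \<open>M \<ge> 2\<close> by (simp add: D_def)
  then have "- 2 * (t / D) * t + D * (t / D)\<^sup>2 = - t\<^sup>2 / D"
    by (simp add: power2_eq_square field_simps)
  moreover have "Vfun M N Phi = real N - (real N)\<^sup>2 / real M - 2 * (t / D) * t + D * (t / D)\<^sup>2"
    using parseval_frame_deviation[OF Phi, of "t / D"] \<open>M \<ge> 2\<close>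
    by (simp add: Vfun_eq_frame_deviation c_Phi_def t_def D_def)
  ultimately show ?thesis by (simp add: t_def D_def)
qed

lemma parseval_Vfun_le_iff:
  assumes "x \<in> parseval_frames F M N" "y \<in> parseval_frames F M N" "M \<ge> 2"
  shows "Vfun M N x \<le> Vfun M N y \<longleftrightarrow> total_coherence M N y \<le> total_coherence M N x"
proof -
  have "real M * (real M - 1) > 0" using \<open>M \<ge> 2\<close> by simp
  then have "Vfun M N x \<le> Vfun M N y \<longleftrightarrow> (total_coherence M N y)\<^sup>2 \<le> (total_coherence M N x)\<^sup>2"
    by (simp add: parseval_Vfun[OF assms(1,3)] parseval_Vfun[OF assms(2,3)] divide_le_cancel)
  also have "\<dots> \<longleftrightarrow> total_coherence M N y \<le> total_coherence M N x"
    by (simp add: total_coherence_nonneg power_mono_iff)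
  finally show ?thesis .
qed

theorem proposition5:
  fixes F :: "complex set" and M N :: nat
  assumes "F = \<real> \<or> F = UNIV"
    and "M > N" and "N \<ge> 1" and "M \<ge> 2"
  shows "maximizers (total_coherence M N) (parseval_frames F M N)
           = minimizers (EAD M N) (parseval_frames F M N)
       \<and> maximizers (total_coherence M N) (parseval_frames F M N)
           = minimizers (Vfun M N) (parseval_frames F M N)"
  using parseval_EAD_le_iff[OF _ _ \<open>N \<ge> 1\<close> \<open>M > N\<close>] parseval_Vfun_le_iff[OF _ _ \<open>M \<ge> 2\<close>]
  by (simp add: maximizers_eq_minimizers_if_order_reversing)

end
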